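(* Fix $N>0$, $R>0$, $\bar\rho>0$ and $0<\gamma<N$. Consider, for each blocklength $n$, a decoder $\mathcal{D}$ with disjoint decoding regions $D_w=\{\mathbf{y}:\mathcal{D}(\mathbf{y})=w\}$ for the channel $\mathbf{y}=\mathbf{x}(w)+\mathbf{z}$, $\mathbf{z}\sim\mathcal{N}(\mathbf{0},N\mathbf{I}_n)$, and numbers $p_n\to0$. Suppose that for some $\rho=\rho_n\in[0,\bar\rho]$ there are at least $e^{n(R-\gamma)}$ codewords $\mathbf{x}(w)$ lying in the shell $\mathcal{T}_n(\mathbf{0},\sqrt{n\rho},\sqrt{n\rho}+\gamma)$, each with error probability $\mathbb{P}(\mathbf{x}(w)+\mathbf{z}\notin D_w)\le(2/\gamma)p_n$. Then for all sufficiently large $n$, the union of the decoding regions of these codewords intersected with the noise-inflated shell $\mathcal{T}_n\big(\mathbf{0},\sqrt{n(\rho+N-\gamma)},\sqrt{n(\rho+N+\gamma)}\big)$ has volume at least $$V_{\text{MIN}}=e^{n(R-\gamma)}\frac{(n\pi(N-\gamma))^{n/2}}{\Gamma\left(\frac n2+1\right)}.$$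
   Context: $\mathcal{T}_n(\mathbf{a},r_1,r_2)=\{\mathbf{x}\in\mathbb{R}^n: r_1\le\|\mathbf{x}-\mathbf{a}\|\le r_2\}$ denotes a spherical shell; volume means $n$-dimensional Lebesgue measure; $\Gamma$ is the gamma function. *)

theory Defs
  imports "HOL-Probability.Probability"
begin

text \<open>Vectors of R^n are modelled as extensional functions nat => real on {..<n}.\<close>

definition Leb_n :: "nat \<Rightarrow> (nat \<Rightarrow> real) measure" where
  "Leb_n n = PiM {..<n} (\<lambda>_. lborel)"

text \<open>Noise z ~ N(0, N I_n): i.i.d. Gaussian coordinates with variance N.\<close>
definition gauss_n :: "real \<Rightarrow> nat \<Rightarrow> (nat \<Rightarrow> real) measure" where
  "gauss_n N n = PiM {..<n} (\<lambda>_. density lborel (normal_density 0 (sqrt N)))"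

definition vnorm :: "nat \<Rightarrow> (nat \<Rightarrow> real) \<Rightarrow> real" where
  "vnorm n x = sqrt (\<Sum>i<n. (x i)\<^sup>2)"

definition shell :: "nat \<Rightarrow> (nat \<Rightarrow> real) \<Rightarrow> real \<Rightarrow> real \<Rightarrow> (nat \<Rightarrow> real) set" where
  "shell n a r1 r2 = {x \<in> space (Leb_n n). r1 \<le> vnorm n (\<lambda>i. x i - a i) \<and> vnorm n (\<lambda>i. x i - a i) \<le> r2}"

definition dec_region :: "nat \<Rightarrow> ((nat \<Rightarrow> real) \<Rightarrow> 'm) \<Rightarrow> 'm \<Rightarrow> (nat \<Rightarrow> real) set" where
  "dec_region n dec w = {y \<in> space (Leb_n n). dec y = w}"

definition err_prob :: "real \<Rightarrow> nat \<Rightarrow> ((nat \<Rightarrow> real) \<Rightarrow> 'm) \<Rightarrow> (nat \<Rightarrow> real) \<Rightarrow> 'm \<Rightarrow> real" where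
  "err_prob N n dec c w = measure (gauss_n N n)
     {z \<in> space (gauss_n N n). restrict (\<lambda>i. c i + z i) {..<n} \<notin> dec_region n dec w}"

end

theory Submission
  imports Defs
begin

(* Let c be a codeword in the shell of radius about sqrt(n rho) and D its decoding
   region.  For large n the received vector c + z (z ~ N(0, N I_n)) lies, with probability
   at least 1/2, in
     E = D \<inter> T \<inter> {y. |y - c|^2 \<ge> n (N - gamma/2)},
   T being the noise-inflated shell: the decoding error is at most 1/4, and Chernoff bounds
   for the noncentral chi-square |c + z|^2 and for |z|^2 make each of the other three
   exceptional events have probability at most 1/16.  On E the density of c + z is at most
   (2 pi N)^(-n/2) exp (-n (N - gamma/2) / (2N)), so vol E is at least one half divided by
   this bound, which (by Gamma(a+1) \<ge> a^a e^(-a-1)) exceeds the volume of a ball of radius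
   sqrt (n (N - gamma)).  The sets E of distinct codewords are disjoint, so adding up gives
   the claim. *)

subsection \<open>The coordinate model of $\mathbb{R}^n$\<close>

lemma space_Leb_n: "space (Leb_n n) = PiE {..<n} (\<lambda>_. UNIV)"
  unfolding Leb_n_def by (simp add: space_PiM)

lemma sets_gauss_n: "sets (gauss_n N n) = sets (Leb_n n)"
  unfolding gauss_n_def Leb_n_def by (intro sets_PiM_cong) auto

lemma space_gauss_n: "space (gauss_n N n) = space (Leb_n n)"
  unfolding gauss_n_def Leb_n_def by (simp add: space_PiM)

lemma prob_space_gauss_n: "N > 0 \<Longrightarrow> prob_space (gauss_n N n)"
  unfolding gauss_n_def by (intro prob_space_PiM prob_space_normal_density) simp

lemma product_sigma_finite_normal:
  "N > 0 \<Longrightarrow> product_sigma_finite (\<lambda>i::nat. density lborel (normal_density (c i) (sqrt N)))"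
  unfolding product_sigma_finite_def
  by (auto intro!: prob_space_imp_sigma_finite prob_space_normal_density)

lemma product_sigma_finite_lborel: "product_sigma_finite (\<lambda>_::nat. (lborel :: real measure))"
  unfolding product_sigma_finite_def using sigma_finite_lborel by blast

lemma shell_sets: "shell n a r1 r2 \<in> sets (Leb_n n)"
  unfolding shell_def vnorm_def Leb_n_def by measurable

text \<open>A shell about the origin lies in a cube, so it has finite volume.\<close>
lemma shell_finite_measure: "emeasure (Leb_n n) (shell n (\<lambda>_. 0) r1 r2) < \<infinity>"
proof -
  interpret L: product_sigma_finite "\<lambda>_::nat. (lborel :: real measure)"
    by (rule product_sigma_finite_lborel)
  define r where "r = \<bar>r2\<bar>"
  define cube where "cube = PiE {..<n} (\<lambda>_. {-r..r})"
  have "shell n (\<lambda>_. 0) r1 r2 \<subseteq> cube"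
  proof
    fix y assume y: "y \<in> shell n (\<lambda>_. 0) r1 r2"
    then have ys: "y \<in> PiE {..<n} (\<lambda>_. UNIV)" and vn: "sqrt (\<Sum>i<n. (y i)^2) \<le> r2"
      by (auto simp: shell_def vnorm_def space_Leb_n)
    have "\<bar>y i\<bar> \<le> r" if "i < n" for i
    proof -
      have "\<bar>y i\<bar> = sqrt ((y i)^2)" by simp
      also have "\<dots> \<le> sqrt (\<Sum>i<n. (y i)^2)" using that
        by (intro real_sqrt_le_mono member_le_sum) auto
      finally show ?thesis using vn by (simp add: r_def)
    qed
    then show "y \<in> cube" using ys by (auto simp: cube_def PiE_def Pi_def abs_le_iff; fastforce)
  qed
  moreover have "cube \<in> sets (Leb_n n)"
    unfolding Leb_n_def cube_def by (rule sets_PiM_I_finite) auto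
  moreover have "emeasure (Leb_n n) cube = (\<Prod>i<n. emeasure lborel {-r..r})"
    unfolding Leb_n_def cube_def by (rule L.emeasure_PiM) auto
  moreover have "(\<Prod>i<n. emeasure lborel {-r..r}) < \<infinity>"
    by (simp add: r_def ennreal_power)
  ultimately show ?thesis by (metis emeasure_mono le_less_trans)
qed

lemma shift_measurable:
  "(\<lambda>z. restrict (\<lambda>i. c i + z i) {..<n}) \<in> measurable (gauss_n N n) (Leb_n n)"
proof -
  have "(\<lambda>z. restrict (\<lambda>i. c i + z i) {..<n}) \<in> measurable (Leb_n n) (Leb_n n)"
    unfolding Leb_n_def by measurable
  then show ?thesis by (simp add: measurable_cong_sets[OF sets_gauss_n refl])
qed

lemma energy_event_sets:
  fixes P :: "real \<Rightarrow> bool"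
  assumes [measurable]: "Measurable.pred borel P"
  shows "{z \<in> space (gauss_n N n). P (\<Sum>i<n. (c i + z i)^2)} \<in> sets (gauss_n N n)"
proof -
  have "{z \<in> space (Leb_n n). P (\<Sum>i<n. (c i + z i)^2)} \<in> sets (Leb_n n)"
    unfolding Leb_n_def by measurable
  then show ?thesis by (simp add: sets_gauss_n space_gauss_n)
qed


subsection \<open>Chernoff bounds for the energy of the received vector\<close>

text \<open>Completing the square: an exponential-quadratic tilt of a centred Gaussian density is a
  multiple of another Gaussian density.\<close>
lemma normal_density_times_exp_square:
  fixes N s a u :: real
  assumes N: "N > 0" and k: "1 - 2 * s * N > 0"
  shows "normal_density 0 (sqrt N) u * exp (s * (a + u)^2) =
    (exp (s * a^2 / (1 - 2 * s * N)) / sqrt (1 - 2 * s * N)) *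
      normal_density (2 * s * N * a / (1 - 2 * s * N)) (sqrt (N / (1 - 2 * s * N))) u"
proof -
  define k where "k = 1 - 2 * s * N"
  have kp: "k > 0" using k by (simp add: k_def)
  have sq: "sqrt (2 * pi * (sqrt (N/k))\<^sup>2) = sqrt (2*pi*N) / sqrt k"
  proof -
    have "(sqrt (N/k))\<^sup>2 = N/k" using N kp by simp
    moreover have "2*pi*(N/k) = (2*pi*N)/k" by simp
    ultimately show ?thesis by (simp only: real_sqrt_divide)
  qed
  have ex: "- (u - 0)\<^sup>2 / (2 * (sqrt N)\<^sup>2) + s * (a+u)^2
      = s * a^2/k + (-(u - 2 * s * N*a/k)\<^sup>2 / (2 * (sqrt (N/k))\<^sup>2))"
  proof -
    have e1: "(sqrt N)\<^sup>2 = N" "(sqrt (N/k))\<^sup>2 = N/k" using N kp by auto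
    have "- (u - 0)\<^sup>2 / (2 * N) + s * (a+u)^2 - (s*a^2/k + (-(u - 2 * s * N*a/k)\<^sup>2 / (2 * (N/k))))
      = ((k * (- (u^2)) + 2*N*k * s * (a+u)^2) - (2*N * s * a^2 - (k*u - 2 * s * N*a)^2)) / (2*N*k)"
      using N kp by (simp add: field_simps power2_eq_square)
    also have "(k * (- (u^2)) + 2*N*k * s * (a+u)^2) - (2*N * s * a^2 - (k*u - 2 * s * N*a)^2) = 0"
      unfolding k_def by algebra
    finally show ?thesis unfolding e1 by simp
  qed
  have "normal_density 0 (sqrt N) u * exp (s * (a+u)^2)
      = 1 / sqrt (2*pi*N) * exp (- (u - 0)\<^sup>2 / (2 * (sqrt N)\<^sup>2) + s * (a+u)^2)"
    using N by (simp add: normal_density_def exp_add[symmetric])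
  also have "\<dots> = 1 / sqrt (2*pi*N) * exp (s * a^2/k) * exp (-(u - 2 * s * N*a/k)\<^sup>2 / (2 * (sqrt (N/k))\<^sup>2))"
    unfolding ex by (simp add: exp_add[symmetric])
  also have "\<dots> = (exp (s * a^2/k) / sqrt k) * normal_density (2 * s * N*a/k) (sqrt (N/k)) u"
    unfolding normal_density_def sq using N kp by (simp add: field_simps)
  finally show ?thesis by (simp add: k_def)
qed

lemma nn_integral_exp_square_normal:
  fixes N s a :: real
  assumes N: "N > 0" and k: "1 - 2 * s * N > 0"
  shows "(\<integral>\<^sup>+u. ennreal (exp (s * (a + u)^2)) \<partial>density lborel (normal_density 0 (sqrt N)))
     = ennreal (exp (s * a^2 / (1 - 2 * s * N)) / sqrt (1 - 2 * s * N))"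
proof -
  let ?C = "exp (s * a^2 / (1 - 2 * s * N)) / sqrt (1 - 2 * s * N)"
  let ?m = "2 * s * N * a / (1 - 2 * s * N)" and ?v = "sqrt (N / (1 - 2 * s * N))"
  have "(\<integral>\<^sup>+u. ennreal (exp (s * (a + u)^2)) \<partial>density lborel (normal_density 0 (sqrt N)))
      = (\<integral>\<^sup>+u. ennreal (normal_density 0 (sqrt N) u * exp (s * (a + u)^2)) \<partial>lborel)"
    by (subst nn_integral_density) (auto simp: ennreal_mult')
  also have "\<dots> = (\<integral>\<^sup>+u. ennreal ?C * ennreal (normal_density ?m ?v u) \<partial>lborel)"
    by (intro nn_integral_cong, subst normal_density_times_exp_square[OF N k], rule ennreal_mult')
       (use k in simp)
  also have "\<dots> = ennreal ?C * (\<integral>\<^sup>+u. ennreal (normal_density ?m ?v u) \<partial>lborel)"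
    by (subst nn_integral_cmult) auto
  also have "(\<integral>\<^sup>+u. ennreal (normal_density ?m ?v u) \<partial>lborel) = 1"
    using prob_space.emeasure_space_1[OF prob_space_normal_density[where \<mu>="?m" and \<sigma>="?v"]]
    using N k by (simp add: emeasure_density)
  finally show ?thesis by simp
qed

lemma gauss_n_mgf_energy:
  fixes N s :: real and c :: "nat \<Rightarrow> real"
  assumes N: "N > 0" and k: "1 - 2 * s * N > 0"
  shows "(\<integral>\<^sup>+z. ennreal (exp (s * (\<Sum>i<n. (c i + z i)^2))) \<partial>gauss_n N n)
     = ennreal (exp (s * (\<Sum>i<n. (c i)^2) / (1 - 2 * s * N)) / sqrt (1 - 2 * s * N) ^ n)"
proof -
  interpret G: product_sigma_finite "\<lambda>_::nat. density lborel (normal_density 0 (sqrt N))"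
    using product_sigma_finite_normal[OF N, of "\<lambda>_. 0"] by simp
  have "(\<integral>\<^sup>+z. ennreal (exp (s * (\<Sum>i<n. (c i + z i)^2))) \<partial>gauss_n N n)
    = (\<integral>\<^sup>+z. (\<Prod>i<n. ennreal (exp (s * (c i + z i)^2))) \<partial>gauss_n N n)"
    by (intro nn_integral_cong) (simp add: sum_distrib_left exp_sum prod_ennreal)
  also have "\<dots> = (\<Prod>i<n. \<integral>\<^sup>+u. ennreal (exp (s * (c i + u)^2)) \<partial>density lborel (normal_density 0 (sqrt N)))"
    unfolding gauss_n_def by (rule G.product_nn_integral_prod) auto
  also have "\<dots> = (\<Prod>i<n. ennreal (exp (s * (c i)^2 / (1 - 2 * s * N)) / sqrt (1 - 2 * s * N)))"
    using nn_integral_exp_square_normal[OF N k] by simp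
  also have "\<dots> = ennreal (\<Prod>i<n. exp (s * (c i)^2 / (1 - 2 * s * N)) / sqrt (1 - 2 * s * N))"
    by (rule prod_ennreal) (use k in simp)
  also have "(\<Prod>i<n. exp (s * (c i)^2 / (1 - 2 * s * N)) / sqrt (1 - 2 * s * N))
     = exp (s * (\<Sum>i<n. (c i)^2) / (1 - 2 * s * N)) / sqrt (1 - 2 * s * N) ^ n"
    by (simp add: prod_dividef exp_sum[symmetric] sum_distrib_left sum_divide_distrib)
  finally show ?thesis .
qed

text \<open>Chernoff's bound: on an event where $s (|c + z|^2 - K) \ge 0$, Markov's inequality
  applied to $e^{s |c + z|^2}$ gives the following estimate (for either sign of $s$).\<close>
lemma gauss_n_chernoff:
  fixes N s K :: real and c :: "nat \<Rightarrow> real"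
  assumes N: "N > 0" and k: "1 - 2 * s * N > 0"
    and A: "A \<in> sets (gauss_n N n)"
    and AK: "\<And>z. z \<in> A \<Longrightarrow> s * ((\<Sum>i<n. (c i + z i)^2) - K) \<ge> 0"
  shows "measure (gauss_n N n) A
    \<le> exp (s * (\<Sum>i<n. (c i)^2) / (1 - 2 * s * N) - s * K - real n * (ln (1 - 2 * s * N) / 2))"
proof -
  let ?k = "1 - 2 * s * N" and ?E = "\<lambda>z. exp (s * (\<Sum>i<n. (c i + z i)^2))"
  have "emeasure (gauss_n N n) A = (\<integral>\<^sup>+z. indicator A z \<partial>gauss_n N n)" using A by simp
  also have "\<dots> \<le> (\<integral>\<^sup>+z. ennreal (exp (- s * K)) * ennreal (?E z) \<partial>gauss_n N n)"
  proof (intro nn_integral_mono)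
    fix z
    show "indicator A z \<le> ennreal (exp (- s * K)) * ennreal (?E z)"
    proof (cases "z \<in> A")
      case True
      have "1 \<le> exp (s * ((\<Sum>i<n. (c i + z i)^2) - K))" using AK[OF True] by simp
      also have "\<dots> = exp (- s * K) * ?E z"
        by (simp add: exp_add[symmetric] algebra_simps)
      finally show ?thesis using True by (simp add: ennreal_mult[symmetric] ennreal_1[symmetric] del: ennreal_1)
    qed simp
  qed
  also have "\<dots> = ennreal (exp (- s * K)) * (\<integral>\<^sup>+z. ennreal (?E z) \<partial>gauss_n N n)"
    by (rule nn_integral_cmult) (simp add: gauss_n_def)
  also have "\<dots> = ennreal (exp (- s * K) * (exp (s * (\<Sum>i<n. (c i)^2) / ?k) / sqrt ?k ^ n))"
    unfolding gauss_n_mgf_energy[OF N k] using k by (simp add: ennreal_mult[symmetric])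
  finally have "measure (gauss_n N n) A \<le> exp (- s * K) * (exp (s * (\<Sum>i<n. (c i)^2) / ?k) / sqrt ?k ^ n)"
    unfolding measure_def by (rule enn2real_leI[rotated]) (use k in simp)
  moreover have "sqrt ?k ^ n = exp (real n * (ln ?k / 2))"
  proof -
    have "sqrt ?k = exp (ln (sqrt ?k))" using k by simp
    also have "ln (sqrt ?k) = ln ?k / 2" using k by (simp add: ln_sqrt)
    finally show ?thesis by (simp only: exp_of_nat_mult)
  qed
  moreover have "exp (- s * K) * (exp X / exp Y) = exp (X - s * K - Y)" for X Y
    by (simp add: exp_diff exp_minus exp_add field_simps)
  ultimately show ?thesis by simp
qed

text \<open>The choice of the tilt for the upper tail: per coordinate, the exponent is a
  quadratic in $s$ which the choice $s = \gamma/(2C)$ makes at most $-\gamma^2/(8C)$.\<close>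
lemma upper_tilt_choice:
  fixes N \<gamma> \<rho> \<rho>b :: real
  assumes N: "N > 0" and g: "\<gamma> > 0" and r: "0 \<le> \<rho>" "\<rho> \<le> \<rho>b"
  defines "C \<equiv> 4*N*\<rho>b + 2*N*\<gamma> + 4*N^2"
  defines "s \<equiv> \<gamma> / (2*C)"
  shows "- 3 * s * \<gamma> / 4 + s^2 * (4*N*\<rho> + N*\<gamma> + 4*N^2) \<le> - (\<gamma>^2 / (8 * C))"
proof -
  have Cp: "C > 0" using N g r unfolding C_def by (simp add: add_nonneg_pos)
  have "4*N*\<rho> \<le> 4*N*\<rho>b" using N r by (intro mult_left_mono) auto
  then have "4*N*\<rho> + N*\<gamma> + 4*N^2 \<le> C" using mult_pos_pos[OF N g] unfolding C_def by linarith
  then have "s^2 * (4*N*\<rho> + N*\<gamma> + 4*N^2) \<le> s^2 * C" by (intro mult_left_mono) auto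
  also have "s^2 * C = s * \<gamma> / 2" using Cp by (simp add: s_def power2_eq_square field_simps)
  finally have "- 3 * s * \<gamma> / 4 + s^2 * (4*N*\<rho> + N*\<gamma> + 4*N^2) \<le> - (s * \<gamma> / 4)" by simp
  also have "s * \<gamma> / 4 = \<gamma>^2 / (8 * C)" using Cp by (simp add: s_def power2_eq_square field_simps)
  finally show ?thesis .
qed

text \<open>Uses $\ln(1-x) \ge -x - 2x^2$ for $0 < x \le 1/2$.\<close>
lemma upper_tail_exponent:
  fixes N \<gamma> \<rho> \<rho>b E :: real and n :: nat
  assumes N: "N > 0" and g: "\<gamma> > 0" and r: "0 \<le> \<rho>" "\<rho> \<le> \<rho>b"
    and E: "0 \<le> E" "E \<le> real n * (\<rho> + \<gamma>/4)"
  defines "C \<equiv> 4*N*\<rho>b + 2*N*\<gamma> + 4*N^2"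
  defines "s \<equiv> \<gamma> / (2*C)"
  shows "1 - 2 * s * N > 0"
    and "s * E / (1 - 2 * s * N) - s * (real n * (\<rho> + N + \<gamma>)) - real n * (ln (1 - 2 * s * N) / 2)
         \<le> - real n * (\<gamma>^2 / (8 * C))"
proof -
  have Cp: "C > 0" using N g r unfolding C_def by (simp add: add_nonneg_pos)
  have sp: "s > 0" using g Cp by (simp add: s_def)
  define x where "x = 2 * s * N"
  have xp: "x > 0" using sp N by (simp add: x_def)
  have x2: "x \<le> 1/2"
  proof -
    have "x = \<gamma>*N / C" using Cp by (simp add: x_def s_def field_simps)
    also have "\<dots> \<le> \<gamma>*N / (2*N*\<gamma>)" using N g r Cp by (intro divide_left_mono) (auto simp: C_def)
    also have "\<dots> = 1/2" using N g by simp
    finally show ?thesis .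
  qed
  define k where "k = 1 - 2 * s * N"
  have kx: "k = 1 - x" by (simp add: k_def x_def)
  have kp: "k > 0" using x2 kx by simp
  then show "1 - 2 * s * N > 0" by (simp add: k_def)
  have ln_k: "- x - 2 * x\<^sup>2 \<le> ln k"
    unfolding kx using xp x2 by (intro ln_one_minus_pos_lower_bound) auto
  have inv_k: "E / k \<le> E * (1 + 2*x)"
  proof -
    have "1 \<le> k * (1 + 2*x)"
      using xp x2 mult_nonneg_nonneg[of x "1 - 2*x"] unfolding kx by (simp add: algebra_simps)
    then have "1 / k \<le> 1 + 2*x" using kp by (simp add: field_simps)
    then show ?thesis using E(1) by (metis divide_inverse inverse_eq_divide mult_left_mono)
  qed
  have tilt: "s * E / k \<le> s * (real n * (\<rho> + \<gamma>/4)) * (1 + 2*x)"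
  proof -
    have "s * E / k = s * (E / k)" by simp
    also have "\<dots> \<le> s * (E * (1 + 2*x))" using inv_k sp by (intro mult_left_mono) auto
    also have "\<dots> \<le> s * (real n * (\<rho> + \<gamma>/4) * (1 + 2*x))" using E sp xp
      by (intro mult_left_mono mult_right_mono) auto
    finally show ?thesis by (simp add: mult.assoc)
  qed
  have per_coord: "s * (\<rho> + \<gamma>/4) * (1 + 2*x) - s * (\<rho> + N + \<gamma>) + (x + 2 * x^2) / 2
       = - 3 * s * \<gamma> / 4 + s^2 * (4*N*\<rho> + N*\<gamma> + 4*N^2)"
    unfolding x_def by (simp add: algebra_simps power2_eq_square)
  have per_coord_bound: "- 3 * s * \<gamma> / 4 + s^2 * (4*N*\<rho> + N*\<gamma> + 4*N^2) \<le> - (\<gamma>^2 / (8 * C))"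
    using upper_tilt_choice[OF N g r] unfolding C_def[symmetric] s_def[symmetric] .
  have "s * E / k - s * (real n * (\<rho> + N + \<gamma>)) - real n * (ln k / 2)
      \<le> real n * (s * (\<rho> + \<gamma>/4) * (1 + 2*x) - s * (\<rho> + N + \<gamma>) + (x + 2 * x^2) / 2)"
  proof -
    have "real n * (s * (\<rho> + \<gamma>/4) * (1 + 2*x) - s * (\<rho> + N + \<gamma>) + (x + 2 * x^2) / 2)
        = s * (real n * (\<rho> + \<gamma>/4)) * (1 + 2*x) - s * (real n * (\<rho> + N + \<gamma>)) + real n * ((x + 2 * x^2) / 2)"
      by (simp add: algebra_simps)
    moreover have "- real n * (ln k / 2) \<le> real n * ((x + 2 * x^2) / 2)"
      using mult_left_mono[OF ln_k, of "real n"] by (simp add: algebra_simps)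
    ultimately show ?thesis using tilt by linarith
  qed
  also have "\<dots> \<le> real n * (- (\<gamma>^2 / (8 * C)))"
    unfolding per_coord using per_coord_bound by (intro mult_left_mono) auto
  finally show "s * E / (1 - 2 * s * N) - s * (real n * (\<rho> + N + \<gamma>)) - real n * (ln (1 - 2 * s * N) / 2)
      \<le> - real n * (\<gamma>^2 / (8 * C))" by (simp add: k_def)
qed

lemma upper_tail:
  fixes N \<gamma> \<rho> \<rho>b :: real and c :: "nat \<Rightarrow> real"
  assumes N: "N > 0" and g: "\<gamma> > 0" and r: "0 \<le> \<rho>" "\<rho> \<le> \<rho>b"
    and energy: "(\<Sum>i<n. (c i)^2) \<le> real n * (\<rho> + \<gamma>/4)"
    and A: "A \<in> sets (gauss_n N n)"
    and AK: "\<And>z. z \<in> A \<Longrightarrow> real n * (\<rho> + N + \<gamma>) \<le> (\<Sum>i<n. (c i + z i)^2)"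
  shows "measure (gauss_n N n) A \<le> exp (- real n * (\<gamma>^2 / (8 * (4*N*\<rho>b + 2*N*\<gamma> + 4*N^2))))"
proof -
  define s where "s = \<gamma> / (2 * (4*N*\<rho>b + 2*N*\<gamma> + 4*N^2))"
  note ex = upper_tail_exponent[OF N g r sum_nonneg energy, folded s_def]
  have "s \<ge> 0" using N g r unfolding s_def by simp
  then have "measure (gauss_n N n) A \<le> exp (s * (\<Sum>i<n. (c i)^2) / (1 - 2 * s * N)
      - s * (real n * (\<rho> + N + \<gamma>)) - real n * (ln (1 - 2 * s * N) / 2))"
    by (intro gauss_n_chernoff[OF N ex(1) A]) (auto dest: AK)
  also have "\<dots> \<le> exp (- real n * (\<gamma>^2 / (8 * (4*N*\<rho>b + 2*N*\<gamma> + 4*N^2))))"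
    using ex(2) by simp
  finally show ?thesis .
qed

text \<open>The choice of the tilt for the lower tail, $t = g/(2C)$ (the Chernoff parameter
  being $s = -t$).\<close>
lemma lower_tilt_choice:
  fixes N g \<rho> \<rho>b :: real
  assumes N: "N > 0" and g: "g > 0" and r: "0 \<le> \<rho>" "\<rho> \<le> \<rho>b"
  defines "C \<equiv> 2*N*\<rho>b + 2*N^2"
  defines "t \<equiv> g / (2*C)"
  shows "- t * g + t^2 * (2*N*\<rho> + 2*N^2) \<le> - (g^2 / (4 * C))"
proof -
  have Cp: "C > 0" using N g r unfolding C_def by (simp add: add_nonneg_pos)
  have "2*N*\<rho> \<le> 2*N*\<rho>b" using N r by (intro mult_left_mono) auto
  then have "2*N*\<rho> + 2*N^2 \<le> C" unfolding C_def by simp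
  then have "t^2 * (2*N*\<rho> + 2*N^2) \<le> t^2 * C" by (intro mult_left_mono) auto
  also have "t^2 * C = t * g / 2" using Cp by (simp add: t_def power2_eq_square field_simps)
  finally have "- t * g + t^2 * (2*N*\<rho> + 2*N^2) \<le> - (t * g / 2)" by simp
  also have "t * g / 2 = g^2 / (4 * C)" using Cp by (simp add: t_def power2_eq_square field_simps)
  finally show ?thesis .
qed

text \<open>Uses $\ln(1+x) \ge x - x^2$ for $0 < x \le 1$.\<close>
lemma lower_tail_exponent:
  fixes N g \<rho> \<rho>b E :: real and n :: nat
  assumes N: "N > 0" and g: "g > 0" "g \<le> N" and r: "0 \<le> \<rho>" "\<rho> \<le> \<rho>b"
    and E: "real n * \<rho> \<le> E"
  defines "C \<equiv> 2*N*\<rho>b + 2*N^2"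
  defines "s \<equiv> - g / (2*C)"
  shows "1 - 2 * s * N > 0"
    and "s * E / (1 - 2 * s * N) - s * (real n * (\<rho> + N - g)) - real n * (ln (1 - 2 * s * N) / 2)
         \<le> - real n * (g^2 / (4 * C))"
proof -
  have Cp: "C > 0" using N g r unfolding C_def by (simp add: add_nonneg_pos)
  define t where "t = g / (2*C)"
  have st: "s = - t" by (simp add: s_def t_def)
  have tp: "t > 0" using g Cp by (simp add: t_def)
  define x where "x = 2 * t * N"
  have xp: "x > 0" using tp N by (simp add: x_def)
  have x1: "x \<le> 1"
  proof -
    have "x = g*N / C" using Cp by (simp add: x_def t_def field_simps)
    also have "\<dots> \<le> g*N / (2*N^2)" using N g r Cp by (intro divide_left_mono) (auto simp: C_def)
    also have "\<dots> = g / (2*N)" using N by (simp add: power2_eq_square)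
    also have "\<dots> \<le> 1" using N g by simp
    finally show ?thesis .
  qed
  define k where "k = 1 - 2 * s * N"
  have kx: "k = 1 + x" by (simp add: k_def x_def st)
  have kp: "k > 0" using xp kx by simp
  then show "1 - 2 * s * N > 0" by (simp add: k_def)
  have ln_k: "x - x\<^sup>2 \<le> ln k" unfolding kx using xp x1 by (intro ln_one_plus_pos_lower_bound) auto
  have tilt: "s * E / k \<le> - t * (real n * \<rho> * (1 - x))"
  proof -
    have "1 - x \<le> 1 / k" using kp unfolding kx by (simp add: field_simps)
    then have "real n * \<rho> * (1 - x) \<le> real n * \<rho> * (1 / k)" using r by (intro mult_left_mono) auto
    also have "\<dots> \<le> E * (1 / k)" using E kp by (intro mult_right_mono) auto
    finally have "t * (real n * \<rho> * (1 - x)) \<le> t * (E / k)" using tp by (intro mult_left_mono) auto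
    then show ?thesis by (simp add: st)
  qed
  have per_coord: "- t * \<rho> * (1 - x) + t * (\<rho> + N - g) - (x - x^2) / 2
       = - t * g + t^2 * (2*N*\<rho> + 2*N^2)"
    unfolding x_def by (simp add: algebra_simps power2_eq_square add_divide_distrib diff_divide_distrib)
  have per_coord_bound: "- t * g + t^2 * (2*N*\<rho> + 2*N^2) \<le> - (g^2 / (4 * C))"
    using lower_tilt_choice[OF N g(1) r] unfolding C_def[symmetric] t_def[symmetric] .
  have "s * E / k - s * (real n * (\<rho> + N - g)) - real n * (ln k / 2)
      \<le> real n * (- t * \<rho> * (1 - x) + t * (\<rho> + N - g) - (x - x^2) / 2)"
  proof -
    have "real n * (- t * \<rho> * (1 - x) + t * (\<rho> + N - g) - (x - x^2) / 2)
        = - t * (real n * \<rho> * (1 - x)) - s * (real n * (\<rho> + N - g)) - real n * ((x - x^2) / 2)"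
      by (simp add: st algebra_simps add_divide_distrib diff_divide_distrib)
    moreover have "real n * ((x - x^2) / 2) \<le> real n * (ln k / 2)" using ln_k by (intro mult_left_mono) auto
    ultimately show ?thesis using tilt by linarith
  qed
  also have "\<dots> \<le> real n * (- (g^2 / (4 * C)))"
    unfolding per_coord using per_coord_bound by (intro mult_left_mono) auto
  finally show "s * E / (1 - 2 * s * N) - s * (real n * (\<rho> + N - g)) - real n * (ln (1 - 2 * s * N) / 2)
      \<le> - real n * (g^2 / (4 * C))" by (simp add: k_def)
qed

lemma lower_tail:
  fixes N g \<rho> \<rho>b :: real and c :: "nat \<Rightarrow> real"
  assumes N: "N > 0" and g: "g > 0" "g \<le> N" and r: "0 \<le> \<rho>" "\<rho> \<le> \<rho>b"
    and energy: "real n * \<rho> \<le> (\<Sum>i<n. (c i)^2)"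
    and A: "A \<in> sets (gauss_n N n)"
    and AK: "\<And>z. z \<in> A \<Longrightarrow> (\<Sum>i<n. (c i + z i)^2) \<le> real n * (\<rho> + N - g)"
  shows "measure (gauss_n N n) A \<le> exp (- real n * (g^2 / (4 * (2*N*\<rho>b + 2*N^2))))"
proof -
  define s where "s = - g / (2 * (2*N*\<rho>b + 2*N^2))"
  note ex = lower_tail_exponent[OF N g r energy, folded s_def]
  have "s \<le> 0" using N g r unfolding s_def by (simp add: add_nonneg_pos)
  then have "measure (gauss_n N n) A \<le> exp (s * (\<Sum>i<n. (c i)^2) / (1 - 2 * s * N)
      - s * (real n * (\<rho> + N - g)) - real n * (ln (1 - 2 * s * N) / 2))"
    by (intro gauss_n_chernoff[OF N ex(1) A] mult_nonpos_nonpos) (auto dest: AK)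
  also have "\<dots> \<le> exp (- real n * (g^2 / (4 * (2*N*\<rho>b + 2*N^2))))"
    using ex(2) by simp
  finally show ?thesis .
qed

subsection \<open>The density of the received vector\<close>

lemma indicator_PiE_prod:
  assumes "finite I" "y \<in> extensional I"
  shows "(indicator (PiE I A) y :: ennreal) = (\<Prod>i\<in>I. indicator (A i) (y i))"
proof (cases "\<forall>i\<in>I. y i \<in> A i")
  case True
  then show ?thesis using assms by (auto simp: indicator_def PiE_iff intro!: prod.neutral)
next
  case False
  then obtain j where "j \<in> I" "y j \<notin> A j" by auto
  then show ?thesis using assms by (auto simp: indicator_def PiE_iff prod_zero_iff)
qed

lemma emeasure_received_box:
  fixes N :: real and c :: "nat \<Rightarrow> real"
  assumes N: "N > 0" and A: "\<And>i. i < n \<Longrightarrow> A i \<in> sets borel"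
  shows "emeasure (distr (gauss_n N n) (Leb_n n) (\<lambda>z. restrict (\<lambda>i. c i + z i) {..<n})) (PiE {..<n} A)
       = (\<Prod>i<n. emeasure (density lborel (normal_density (c i) (sqrt N))) (A i))"
proof -
  let ?\<tau> = "\<lambda>z. restrict (\<lambda>i. c i + z i) {..<n}"
  interpret G: product_sigma_finite "\<lambda>_::nat. density lborel (normal_density 0 (sqrt N))"
    using product_sigma_finite_normal[OF N, of "\<lambda>_. 0"] by simp
  have box: "PiE {..<n} A \<in> sets (Leb_n n)"
    unfolding Leb_n_def by (rule sets_PiM_I_finite) (use A in auto)
  have shifted: "emeasure (density lborel (normal_density 0 (sqrt N))) {u. c i + u \<in> A i}
      = emeasure (density lborel (normal_density (c i) (sqrt N))) (A i)" if i: "i < n" for i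
  proof -
    have [measurable]: "A i \<in> sets borel" using A[OF i] .
    have "emeasure (density lborel (normal_density 0 (sqrt N))) {u. c i + u \<in> A i}
        = (\<integral>\<^sup>+u. ennreal (normal_density (c i) (sqrt N) (c i + u)) * indicator (A i) (c i + u) \<partial>lborel)"
      by (subst emeasure_density) (auto intro!: nn_integral_cong simp: normal_density_def indicator_def)
    also have "\<dots> = (\<integral>\<^sup>+v. ennreal (normal_density (c i) (sqrt N) v) * indicator (A i) v \<partial>lborel)"
      using nn_integral_real_affine[of "\<lambda>v. ennreal (normal_density (c i) (sqrt N) v) * indicator (A i) v"
          1 "c i"] by simp
    finally show ?thesis by (simp add: emeasure_density)
  qed
  have "?\<tau> -` PiE {..<n} A \<inter> space (gauss_n N n) = PiE {..<n} (\<lambda>i. {u. c i + u \<in> A i})"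
    unfolding space_gauss_n space_Leb_n by (auto simp: PiE_def Pi_def extensional_def)
  then have "emeasure (distr (gauss_n N n) (Leb_n n) ?\<tau>) (PiE {..<n} A)
      = emeasure (gauss_n N n) (PiE {..<n} (\<lambda>i. {u. c i + u \<in> A i}))"
    by (simp add: emeasure_distr[OF shift_measurable box])
  also have "\<dots> = (\<Prod>i<n. emeasure (density lborel (normal_density 0 (sqrt N))) {u. c i + u \<in> A i})"
    unfolding gauss_n_def using A by (intro G.emeasure_PiM) auto
  finally show ?thesis using shifted by simp
qed

lemma emeasure_product_density_box:
  fixes N :: real and c :: "nat \<Rightarrow> real"
  assumes A: "\<And>i. i < n \<Longrightarrow> A i \<in> sets borel"
  shows "emeasure (density (Leb_n n) (\<lambda>y. \<Prod>i<n. ennreal (normal_density (c i) (sqrt N) (y i))))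
      (PiE {..<n} A) = (\<Prod>i<n. emeasure (density lborel (normal_density (c i) (sqrt N))) (A i))"
proof -
  interpret L: product_sigma_finite "\<lambda>_::nat. (lborel :: real measure)"
    by (rule product_sigma_finite_lborel)
  let ?g = "\<lambda>y. \<Prod>i<n. ennreal (normal_density (c i) (sqrt N) (y i))"
  have box: "PiE {..<n} A \<in> sets (Leb_n n)"
    unfolding Leb_n_def by (rule sets_PiM_I_finite) (use A in auto)
  have gm: "?g \<in> borel_measurable (Leb_n n)" unfolding Leb_n_def by measurable
  have "emeasure (density (Leb_n n) ?g) (PiE {..<n} A) = (\<integral>\<^sup>+y. ?g y * indicator (PiE {..<n} A) y \<partial>Leb_n n)"
    by (rule emeasure_density[OF gm box])
  also have "\<dots> = (\<integral>\<^sup>+y. (\<Prod>i<n. ennreal (normal_density (c i) (sqrt N) (y i)) * indicator (A i) (y i)) \<partial>Leb_n n)"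
    by (intro nn_integral_cong) (simp add: space_Leb_n PiE_iff indicator_PiE_prod prod.distrib)
  also have "\<dots> = (\<Prod>i<n. \<integral>\<^sup>+v. ennreal (normal_density (c i) (sqrt N) v) * indicator (A i) v \<partial>lborel)"
    unfolding Leb_n_def by (rule L.product_nn_integral_prod) (use A in auto)
  also have "\<dots> = (\<Prod>i<n. emeasure (density lborel (normal_density (c i) (sqrt N))) (A i))"
    using A by (intro prod.cong refl emeasure_density[symmetric]) auto
  finally show ?thesis .
qed

text \<open>Hence, by uniqueness of product measures, the received vector $c + z$ has the product
  Gaussian density with respect to Lebesgue measure.\<close>
lemma received_density:
  fixes N :: real and c :: "nat \<Rightarrow> real"
  assumes N: "N > 0"
  shows "distr (gauss_n N n) (Leb_n n) (\<lambda>z. restrict (\<lambda>i. c i + z i) {..<n})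
    = density (Leb_n n) (\<lambda>y. \<Prod>i<n. ennreal (normal_density (c i) (sqrt N) (y i)))"
proof -
  let ?P = "\<lambda>i. density lborel (normal_density (c i) (sqrt N))"
  interpret P: product_sigma_finite ?P by (rule product_sigma_finite_normal[OF N])
  have sets_P: "sets (PiM {..<n} ?P) = sets (Leb_n n)"
    unfolding Leb_n_def by (intro sets_PiM_cong) auto
  have "distr (gauss_n N n) (Leb_n n) (\<lambda>z. restrict (\<lambda>i. c i + z i) {..<n}) = PiM {..<n} ?P"
    by (rule P.PiM_eqI) (auto simp: sets_P emeasure_received_box[OF N])
  moreover have "density (Leb_n n) (\<lambda>y. \<Prod>i<n. ennreal (normal_density (c i) (sqrt N) (y i))) = PiM {..<n} ?P"
    by (rule P.PiM_eqI) (auto simp: sets_P emeasure_product_density_box)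
  ultimately show ?thesis by simp
qed

lemma prod_normal_density:
  assumes N: "N > 0"
  shows "(\<Prod>i<n. normal_density (c i) (sqrt N) (y i))
    = (1 / sqrt (2*pi*N))^n * exp (- (\<Sum>i<n. (y i - c i)^2) / (2*N))"
proof -
  have "(\<Prod>i<n. normal_density (c i) (sqrt N) (y i))
      = (\<Prod>i<n. (1 / sqrt (2*pi*N)) * exp (- ((y i - c i)^2) / (2*N)))"
    using N by (intro prod.cong refl) (simp add: normal_density_def)
  also have "\<dots> = (1 / sqrt (2*pi*N))^n * exp (\<Sum>i<n. - ((y i - c i)^2) / (2*N))"
    by (subst exp_sum) (simp_all only: prod.distrib prod_constant card_lessThan finite_lessThan)
  finally show ?thesis by (simp add: sum_negf sum_divide_distrib)
qed

text \<open>If every point of $E$ is at squared distance at least $n\beta$ from $c$, the density of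
  $c + z$ on $E$ is at most $(2\pi N)^{-n/2} e^{-n\beta/(2N)}$, which bounds
  $P(c + z \in E)$ in terms of the volume of $E$.\<close>
lemma received_prob_le_volume:
  fixes N \<beta> :: real and c :: "nat \<Rightarrow> real"
  assumes N: "N > 0" and E: "E \<in> sets (Leb_n n)"
    and far: "\<And>y. y \<in> E \<Longrightarrow> real n * \<beta> \<le> (\<Sum>i<n. (y i - c i)^2)"
  shows "emeasure (gauss_n N n) {z \<in> space (gauss_n N n). restrict (\<lambda>i. c i + z i) {..<n} \<in> E}
    \<le> ennreal ((1 / sqrt (2*pi*N))^n * exp (- (real n * \<beta>) / (2*N))) * emeasure (Leb_n n) E"
proof -
  let ?\<tau> = "\<lambda>z. restrict (\<lambda>i. c i + z i) {..<n}"
  let ?g = "\<lambda>y. \<Prod>i<n. ennreal (normal_density (c i) (sqrt N) (y i))"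
  let ?M = "(1 / sqrt (2*pi*N))^n * exp (- (real n * \<beta>) / (2*N))"
  have gm: "?g \<in> borel_measurable (Leb_n n)" unfolding Leb_n_def by measurable
  have bound: "?g y \<le> ennreal ?M" if "y \<in> E" for y
  proof -
    have "?g y = ennreal (\<Prod>i<n. normal_density (c i) (sqrt N) (y i))" by (rule prod_ennreal) simp
    also have "\<dots> = ennreal ((1 / sqrt (2*pi*N))^n * exp (- (\<Sum>i<n. (y i - c i)^2) / (2*N)))"
      by (simp only: prod_normal_density[OF N])
    also have "\<dots> \<le> ennreal ?M"
      using far[OF that] N by (intro ennreal_leI mult_left_mono) (auto simp: divide_right_mono)
    finally show ?thesis .
  qed
  have "{z \<in> space (gauss_n N n). ?\<tau> z \<in> E} = ?\<tau> -` E \<inter> space (gauss_n N n)" by auto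
  then have "emeasure (gauss_n N n) {z \<in> space (gauss_n N n). ?\<tau> z \<in> E}
      = emeasure (distr (gauss_n N n) (Leb_n n) ?\<tau>) E"
    using emeasure_distr[OF shift_measurable E] by simp
  also have "\<dots> = emeasure (density (Leb_n n) ?g) E" by (simp only: received_density[OF N])
  also have "\<dots> = (\<integral>\<^sup>+y. ?g y * indicator E y \<partial>Leb_n n)" by (rule emeasure_density[OF gm E])
  also have "\<dots> \<le> (\<integral>\<^sup>+y. ennreal ?M * indicator E y \<partial>Leb_n n)"
    using bound by (intro nn_integral_mono) (simp add: indicator_def)
  also have "\<dots> = ennreal ?M * emeasure (Leb_n n) E" by (rule nn_integral_cmult_indicator[OF E])
  finally show ?thesis .
qed

subsection \<open>Ball volume against the Gaussian density\<close>

text \<open>A crude Stirling-type lower bound, from the part of the Gamma integral over $[a, a+1]$.\<close>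
lemma Gamma_lower_bound:
  fixes a :: real assumes "a > 0"
  shows "a powr a * exp (-(a+1)) \<le> Gamma (a+1)"
proof -
  have "ennreal (a powr a * exp (-(a+1)))
      = (\<integral>\<^sup>+t. ennreal (a powr a * exp (-(a+1))) * indicator {a..a+1} t \<partial>lborel)"
    by (simp add: nn_integral_cmult_indicator)
  also have "\<dots> \<le> (\<integral>\<^sup>+t. ennreal (indicator {0..} t * t powr (a + 1 - 1) / exp t) \<partial>lborel)"
  proof (intro nn_integral_mono)
    fix t :: real
    show "ennreal (a powr a * exp (-(a+1))) * indicator {a..a+1} t
        \<le> ennreal (indicator {0..} t * t powr (a + 1 - 1) / exp t)"
    proof (cases "t \<in> {a..a+1}")
      case True
      then have t: "a \<le> t" "t \<le> a + 1" by auto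
      have "a powr a \<le> t powr a" using t assms by (intro powr_mono2) auto
      moreover have "exp (-(a+1)) \<le> exp (- t)" using t by simp
      moreover have "exp (- t) = 1 / exp t" by (simp add: exp_minus field_simps)
      ultimately have "a powr a * exp (-(a+1)) \<le> t powr a * (1 / exp t)"
        by (metis exp_ge_zero mult_mono powr_ge_zero)
      then show ?thesis using True t assms by (auto intro!: ennreal_leI)
    qed auto
  qed
  also have "\<dots> = ennreal (Gamma (a+1))"
    using Gamma_conv_nn_integral_real[of "a+1"] assms by simp
  finally show ?thesis using assms by (subst (asm) ennreal_le_iff) auto
qed

lemma ball_volume_upper_bound:
  fixes r :: real assumes r: "r > 0" and n: "n > 0"
  shows "(real n * pi * r) powr (real n / 2) / Gamma (real n / 2 + 1)
    \<le> exp (real n / 2 * ln (2*pi*r) + real n / 2 + 1)"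
proof -
  define a where "a = real n / 2"
  have a: "a > 0" using n by (simp add: a_def)
  have "(real n * pi * r) powr a = (a * (2*pi*r)) powr a"
    by (simp add: a_def mult.assoc)
  also have "\<dots> = exp (a * ln a + a * ln (2*pi*r))"
    using a r by (simp add: powr_def ln_mult distrib_left)
  finally have num: "(real n * pi * r) powr a = exp (a * ln a + a * ln (2*pi*r))" .
  have "exp (a * ln a - a - 1) = a powr a * exp (-(a+1))"
    using a by (simp add: powr_def exp_diff exp_minus field_simps exp_add)
  also have "\<dots> \<le> Gamma (a + 1)" by (rule Gamma_lower_bound[OF a])
  finally have den: "exp (a * ln a - a - 1) \<le> Gamma (a + 1)" .
  have "(real n * pi * r) powr (real n / 2) / Gamma (real n / 2 + 1)
      \<le> exp (a * ln a + a * ln (2*pi*r)) / exp (a * ln a - a - 1)"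
    unfolding a_def[symmetric] num using den a by (intro divide_left_mono) auto
  also have "\<dots> = exp (a * ln (2*pi*r) + a + 1)" by (simp add: exp_diff[symmetric])
  finally show ?thesis by (simp add: a_def)
qed

text \<open>The ball of radius $\sqrt{n(N-\gamma)}$ times the maximal density of $c + z$ at distance
  at least $\sqrt{n(N - \gamma/2)}$ from $c$ is exponentially small: the ball is a
  factor $e^{-\Theta(n)}$ smaller than the typical set of the noise.\<close>
lemma ball_volume_times_density:
  fixes N \<gamma> :: real
  assumes g: "0 < \<gamma>" "\<gamma> < N" and n: "n > 0"
  shows "(real n * pi * (N - \<gamma>)) powr (real n / 2) / Gamma (real n / 2 + 1) *
      ((1 / sqrt (2*pi*N))^n * exp (- (real n * (N - \<gamma>/2)) / (2*N)))
    \<le> exp (1 - real n * \<gamma> / (4*N))"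
proof -
  define a where "a = real n / 2"
  have a: "a > 0" using n by (simp add: a_def)
  have N: "N > 0" using g by simp
  have density: "(1 / sqrt (2*pi*N))^n = exp (- a * ln (2*pi*N))"
  proof -
    have "(1 / sqrt (2*pi*N))^n = (1 / sqrt (2*pi*N)) powr (real n)"
      using N by (simp add: powr_realpow)
    also have "\<dots> = exp (- a * ln (2*pi*N))"
      using N by (simp add: powr_def ln_div ln_sqrt a_def)
    finally show ?thesis .
  qed
  have ln_ratio: "ln (2*pi*(N-\<gamma>)) - ln (2*pi*N) \<le> - \<gamma> / N"
  proof -
    have "ln (2*pi*(N-\<gamma>)) - ln (2*pi*N) = ln ((2*pi*(N-\<gamma>)) / (2*pi*N))"
      using g by (subst ln_div) auto
    also have "(2*pi*(N-\<gamma>)) / (2*pi*N) = 1 + (- \<gamma>/N)" using g by (simp add: field_simps)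
    finally have "ln (2*pi*(N-\<gamma>)) - ln (2*pi*N) = ln (1 + (- \<gamma>/N))" .
    also have "\<dots> \<le> - \<gamma>/N" using g by (intro ln_add_one_self_le_self2) (auto simp: field_simps)
    finally show ?thesis .
  qed
  have "(real n * pi * (N - \<gamma>)) powr (real n / 2) / Gamma (real n / 2 + 1) *
      ((1 / sqrt (2*pi*N))^n * exp (- (real n * (N - \<gamma>/2)) / (2*N)))
    \<le> exp (a * ln (2*pi*(N-\<gamma>)) + a + 1) * (exp (- a * ln (2*pi*N)) * exp (- (real n * (N - \<gamma>/2)) / (2*N)))"
    unfolding density a_def using ball_volume_upper_bound[of "N - \<gamma>" n] g n
    by (intro mult_right_mono) auto
  also have "\<dots> = exp (a * (ln (2*pi*(N-\<gamma>)) - ln (2*pi*N)) + 1 + a * \<gamma> / N / 2)"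
    using N by (simp add: exp_add[symmetric] a_def field_simps)
  also have "\<dots> \<le> exp (a * (- \<gamma> / N) + 1 + a * \<gamma> / N / 2)"
  proof -
    have "a * (ln (2*pi*(N-\<gamma>)) - ln (2*pi*N)) \<le> a * (- \<gamma> / N)"
      using ln_ratio a by (intro mult_left_mono) auto
    moreover have "a * \<gamma> / N = a*\<gamma>/(N*2) + \<gamma>*a/(2*N)" using N by (simp add: field_simps)
    ultimately show ?thesis by (simp; linarith)
  qed
  also have "\<dots> = exp (1 - real n * \<gamma> / (4*N))" by (simp add: a_def field_simps)
  finally show ?thesis .
qed

subsection \<open>What ``large blocklength'' means\<close>

text \<open>The finitely many smallness conditions on $n$ used in the one-codeword argument:
  three Chernoff tails below $1/16$, the shell thickness $\gamma$ negligible against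
  $n\gamma/4$, and the ball-to-noise volume ratio below $1/2$.\<close>
definition large_blocklength :: "real \<Rightarrow> real \<Rightarrow> real \<Rightarrow> nat \<Rightarrow> bool" where
  "large_blocklength N \<gamma> \<rho>b n \<longleftrightarrow> n > 0 \<and>
     exp (- real n * (\<gamma>^2 / (8 * (4*N*\<rho>b + 2*N*\<gamma> + 4*N^2)))) \<le> 1/16 \<and>
     exp (- real n * (\<gamma>^2 / (4 * (2*N*\<rho>b + 2*N^2)))) \<le> 1/16 \<and>
     exp (- real n * ((\<gamma>/2)^2 / (4 * (2*N*\<rho>b + 2*N^2)))) \<le> 1/16 \<and>
     2 * \<gamma> * sqrt (real n * \<rho>b) + \<gamma>^2 \<le> real n * \<gamma> / 4 \<and>
     exp (1 - real n * \<gamma> / (4*N)) \<le> 1/2"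

lemma eventually_exp_small:
  fixes \<kappa> \<epsilon> :: real assumes k: "\<kappa> > 0" and e: "\<epsilon> > 0"
  shows "eventually (\<lambda>n. exp (- real n * \<kappa>) \<le> \<epsilon>) sequentially"
proof -
  obtain m :: nat where m: "1 / (\<kappa> * \<epsilon>) < real m" using reals_Archimedean2 by blast
  show ?thesis
  proof (rule eventually_sequentiallyI[of m])
    fix n assume "m \<le> n"
    then have "1 / (\<kappa> * \<epsilon>) < real n" using m by linarith
    then have "1 / \<epsilon> < real n * \<kappa>" using k e by (simp add: field_simps)
    also have "real n * \<kappa> \<le> exp (real n * \<kappa>)" using exp_ge_add_one_self[of "real n * \<kappa>"] by linarith
    finally have "1 / exp (real n * \<kappa>) < \<epsilon>" using e by (simp add: field_simps)
    then show "exp (- real n * \<kappa>) \<le> \<epsilon>" by (simp add: exp_minus field_simps)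
  qed
qed

lemma eventually_sqrt_small:
  fixes \<gamma> \<rho>b :: real assumes g: "\<gamma> > 0" and r: "\<rho>b \<ge> 0"
  shows "eventually (\<lambda>n. 2 * \<gamma> * sqrt (real n * \<rho>b) + \<gamma>^2 \<le> real n * \<gamma> / 4) sequentially"
proof -
  define B where "B = 8 * sqrt \<rho>b + 2 * \<gamma> + 2"
  have B2: "B \<ge> 2" unfolding B_def using g r by simp
  obtain m :: nat where m: "B^2 < real m" using reals_Archimedean2 by blast
  show ?thesis
  proof (rule eventually_sequentiallyI[of m])
    fix n assume "m \<le> n"
    then have "B^2 < real n" using m by linarith
    define u where "u = sqrt (real n)"
    have uB: "B \<le> u" unfolding u_def using \<open>B^2 < real n\<close> B2 real_le_rsqrt by fastforce
    have u2: "u \<ge> 2" using uB B2 by simp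
    have s: "sqrt (real n * \<rho>b) = u * sqrt \<rho>b" unfolding u_def by (simp add: real_sqrt_mult)
    have "(\<gamma> * u / 4) * B \<le> (\<gamma> * u / 4) * u" using uB g u2 by (intro mult_left_mono) auto
    also have "\<dots> = real n * \<gamma> / 4" unfolding u_def by (simp add: power2_eq_square)
    finally have "(\<gamma> * u / 4) * B \<le> real n * \<gamma> / 4" .
    moreover have "(\<gamma> * u / 4) * B = 2 * \<gamma> * (u * sqrt \<rho>b) + \<gamma> * u * (2 * \<gamma> + 2) / 4"
      unfolding B_def by (simp add: algebra_simps)
    moreover have "\<gamma> * 2 * (2 * \<gamma>) \<le> \<gamma> * u * (2 * \<gamma> + 2)" using g u2 by (intro mult_mono) auto
    ultimately show "2 * \<gamma> * sqrt (real n * \<rho>b) + \<gamma>^2 \<le> real n * \<gamma> / 4"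
      unfolding s by (simp add: power2_eq_square)
  qed
qed

lemma eventually_large_blocklength:
  assumes N: "N > 0" and g: "\<gamma> > 0" and r: "\<rho>b \<ge> 0"
  shows "eventually (large_blocklength N \<gamma> \<rho>b) sequentially"
proof -
  have C: "4*N*\<rho>b + 2*N*\<gamma> + 4*N^2 > 0" "2*N*\<rho>b + 2*N^2 > 0"
    using N g r by (simp_all add: add_nonneg_pos)
  have "eventually (\<lambda>n. exp (- real n * (\<gamma> / (4*N))) \<le> exp (-1) / 2) sequentially"
    using N g by (intro eventually_exp_small) auto
  then have ratio: "eventually (\<lambda>n. exp (1 - real n * \<gamma> / (4*N)) \<le> 1/2) sequentially"
  proof (rule eventually_mono)
    fix n assume "exp (- real n * (\<gamma> / (4*N))) \<le> exp (-1) / 2"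
    then have "exp 1 * exp (- real n * (\<gamma> / (4*N))) \<le> exp 1 * (exp (-1) / 2)" by simp
    also have "exp 1 * (exp (-1) / 2) = (1/2 :: real)" by (simp add: exp_minus field_simps)
    also have "exp 1 * exp (- real n * (\<gamma> / (4*N))) = exp (1 - real n * \<gamma> / (4*N))"
      by (simp add: exp_add[symmetric])
    finally show "exp (1 - real n * \<gamma> / (4*N)) \<le> 1/2" .
  qed
  show ?thesis unfolding large_blocklength_def
    using N g C
    by (intro eventually_conj eventually_gt_at_top eventually_exp_small eventually_sqrt_small ratio r)
       auto
qed

subsection \<open>The volume bound for a single codeword\<close>

lemma shell_energy_bounds:
  fixes \<gamma> \<rho> \<rho>b :: real and c :: "nat \<Rightarrow> real"
  assumes g: "\<gamma> > 0" and r: "0 \<le> \<rho>" "\<rho> \<le> \<rho>b"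
    and c: "c \<in> shell n (\<lambda>_. 0) (sqrt (real n * \<rho>)) (sqrt (real n * \<rho>) + \<gamma>)"
    and thin: "2 * \<gamma> * sqrt (real n * \<rho>b) + \<gamma>^2 \<le> real n * \<gamma> / 4"
  shows "real n * \<rho> \<le> (\<Sum>i<n. (c i)^2)" and "(\<Sum>i<n. (c i)^2) \<le> real n * (\<rho> + \<gamma>/4)"
proof -
  define E where "E = (\<Sum>i<n. (c i)^2)"
  have E0: "0 \<le> E" unfolding E_def by (simp add: sum_nonneg)
  have radius: "sqrt (real n * \<rho>) \<le> sqrt E" "sqrt E \<le> sqrt (real n * \<rho>) + \<gamma>"
    using c by (simp_all add: shell_def vnorm_def E_def)
  from radius(1) show "real n * \<rho> \<le> (\<Sum>i<n. (c i)^2)" by (simp add: E_def)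
  have "E = (sqrt E)^2" using E0 by simp
  also have "\<dots> \<le> (sqrt (real n * \<rho>) + \<gamma>)^2" using radius(2) E0 by (intro power_mono) auto
  also have "\<dots> = real n * \<rho> + 2 * \<gamma> * sqrt (real n * \<rho>) + \<gamma>^2"
    using r by (simp add: power2_eq_square algebra_simps)
  also have "\<dots> \<le> real n * \<rho> + 2 * \<gamma> * sqrt (real n * \<rho>b) + \<gamma>^2"
    using r g by (auto intro!: mult_left_mono real_sqrt_le_mono)
  also have "\<dots> \<le> real n * (\<rho> + \<gamma>/4)" using thin by (simp add: algebra_simps)
  finally show "(\<Sum>i<n. (c i)^2) \<le> real n * (\<rho> + \<gamma>/4)" by (simp add: E_def)
qed

lemma (in prob_space) prob_avoid_four:
  assumes "A \<in> events" "B \<in> events" "C \<in> events" "D \<in> events"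
  shows "1 - (prob A + prob B + prob C + prob D) \<le> prob (space M - (A \<union> B \<union> C \<union> D))"
proof -
  have "prob (A \<union> B \<union> C \<union> D) \<le> prob A + prob B + prob C + prob D"
    using assms measure_subadditive[of "A \<union> B \<union> C" M D]
      measure_subadditive[of "A \<union> B" M C] measure_subadditive[of A M B]
    by (auto simp: emeasure_eq_measure)
  then show ?thesis using assms by (simp add: prob_compl)
qed

lemma energy_deviations:
  fixes N \<gamma> \<rho>b \<rho> :: real and c :: "nat \<Rightarrow> real"
  assumes N: "N > 0" and g: "\<gamma> > 0" "\<gamma> < N" and r: "0 \<le> \<rho>" "\<rho> \<le> \<rho>b"
    and large: "large_blocklength N \<gamma> \<rho>b n"
    and c: "c \<in> shell n (\<lambda>_. 0) (sqrt (real n * \<rho>)) (sqrt (real n * \<rho>) + \<gamma>)"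
  shows "measure (gauss_n N n) {z \<in> space (gauss_n N n). real n * (\<rho> + N + \<gamma>) < (\<Sum>i<n. (c i + z i)^2)} \<le> 1/16"
    and "measure (gauss_n N n) {z \<in> space (gauss_n N n). (\<Sum>i<n. (c i + z i)^2) < real n * (\<rho> + N - \<gamma>)} \<le> 1/16"
    and "measure (gauss_n N n) {z \<in> space (gauss_n N n). (\<Sum>i<n. (z i)^2) < real n * (N - \<gamma>/2)} \<le> 1/16"
proof -
  let ?G = "gauss_n N n"
  have thin: "2 * \<gamma> * sqrt (real n * \<rho>b) + \<gamma>^2 \<le> real n * \<gamma> / 4"
    using large by (simp add: large_blocklength_def)
  note energy = shell_energy_bounds[OF g(1) r c thin]
  have Au: "{z \<in> space ?G. real n * (\<rho> + N + \<gamma>) < (\<Sum>i<n. (c i + z i)^2)} \<in> sets ?G"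
    and Al: "{z \<in> space ?G. (\<Sum>i<n. (c i + z i)^2) < real n * (\<rho> + N - \<gamma>)} \<in> sets ?G"
    and Ah: "{z \<in> space ?G. (\<Sum>i<n. (0 + z i)^2) < real n * (0 + N - \<gamma>/2)} \<in> sets ?G"
    by (rule energy_event_sets; simp)+
  show "measure ?G {z \<in> space ?G. real n * (\<rho> + N + \<gamma>) < (\<Sum>i<n. (c i + z i)^2)} \<le> 1/16"
    using upper_tail[OF N g(1) r energy(2) Au] large unfolding large_blocklength_def by fastforce
  show "measure ?G {z \<in> space ?G. (\<Sum>i<n. (c i + z i)^2) < real n * (\<rho> + N - \<gamma>)} \<le> 1/16"
    using lower_tail[OF N g(1) less_imp_le[OF g(2)] r energy(1) Al] large
    unfolding large_blocklength_def by fastforce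
  have "measure ?G {z \<in> space ?G. (\<Sum>i<n. (0 + z i)^2) < real n * (0 + N - \<gamma>/2)}
      \<le> exp (- real n * ((\<gamma>/2)^2 / (4 * (2*N*\<rho>b + 2*N^2))))"
    by (rule lower_tail[where c="\<lambda>_. 0" and \<rho>=0, OF N _ _ _ _ _ Ah]) (use g r in auto)
  then show "measure ?G {z \<in> space ?G. (\<Sum>i<n. (z i)^2) < real n * (N - \<gamma>/2)} \<le> 1/16"
    using large unfolding large_blocklength_def by simp
qed

lemma received_typical:
  fixes N \<gamma> \<rho>b \<rho> :: real and c :: "nat \<Rightarrow> real" and D :: "(nat \<Rightarrow> real) set"
  assumes N: "N > 0" and g: "\<gamma> > 0" "\<gamma> < N" and r: "0 \<le> \<rho>" "\<rho> \<le> \<rho>b"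
    and large: "large_blocklength N \<gamma> \<rho>b n"
    and D: "D \<in> sets (Leb_n n)"
    and c: "c \<in> shell n (\<lambda>_. 0) (sqrt (real n * \<rho>)) (sqrt (real n * \<rho>) + \<gamma>)"
    and err: "measure (gauss_n N n) {z \<in> space (gauss_n N n). restrict (\<lambda>i. c i + z i) {..<n} \<notin> D} \<le> 1/4"
  defines "T \<equiv> shell n (\<lambda>_. 0) (sqrt (real n * (\<rho> + N - \<gamma>))) (sqrt (real n * (\<rho> + N + \<gamma>)))"
    and "H \<equiv> {y \<in> space (Leb_n n). real n * (N - \<gamma>/2) \<le> (\<Sum>i<n. (y i - c i)^2)}"
  shows "1/2 \<le> measure (gauss_n N n) {z \<in> space (gauss_n N n). restrict (\<lambda>i. c i + z i) {..<n} \<in> D \<inter> T \<inter> H}"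
proof -
  let ?G = "gauss_n N n" and ?\<tau> = "\<lambda>z. restrict (\<lambda>i. c i + z i) {..<n}"
  interpret G: prob_space ?G by (rule prob_space_gauss_n[OF N])
  define Ae where "Ae = {z \<in> space ?G. ?\<tau> z \<notin> D}"
  define Au where "Au = {z \<in> space ?G. real n * (\<rho> + N + \<gamma>) < (\<Sum>i<n. (c i + z i)^2)}"
  define Al where "Al = {z \<in> space ?G. (\<Sum>i<n. (c i + z i)^2) < real n * (\<rho> + N - \<gamma>)}"
  define Ah where "Ah = {z \<in> space ?G. (\<Sum>i<n. (0 + z i)^2) < real n * (0 + N - \<gamma>/2)}"
  have "Ae = ?\<tau> -` (space (Leb_n n) - D) \<inter> space ?G"
    unfolding Ae_def using measurable_space[OF shift_measurable] by auto
  then have Ae: "Ae \<in> G.events" using measurable_sets[OF shift_measurable] D by auto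
  have Au: "Au \<in> G.events" and Al: "Al \<in> G.events" and Ah: "Ah \<in> G.events"
    unfolding Au_def Al_def Ah_def by (intro energy_event_sets; simp)+
  note deviations = energy_deviations[OF N g r large c]
  have "G.prob Ae \<le> 1/4" "G.prob Au \<le> 1/16" "G.prob Al \<le> 1/16" "G.prob Ah \<le> 1/16"
    using err deviations unfolding Ae_def Au_def Al_def Ah_def by simp_all
  then have "1/2 \<le> G.prob (space ?G - (Ae \<union> Au \<union> Al \<union> Ah))"
    using G.prob_avoid_four[OF Ae Au Al Ah] by linarith
  also have "\<dots> \<le> G.prob {z \<in> space ?G. ?\<tau> z \<in> D \<inter> T \<inter> H}"
  proof (rule G.finite_measure_mono)
    show "space ?G - (Ae \<union> Au \<union> Al \<union> Ah) \<subseteq> {z \<in> space ?G. ?\<tau> z \<in> D \<inter> T \<inter> H}"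
    proof
      fix z assume z: "z \<in> space ?G - (Ae \<union> Au \<union> Al \<union> Ah)"
      have in_space: "?\<tau> z \<in> space (Leb_n n)" by (simp add: space_Leb_n)
      have "(\<Sum>i<n. (?\<tau> z i - 0)^2) = (\<Sum>i<n. (c i + z i)^2)"
        and "(\<Sum>i<n. (?\<tau> z i - c i)^2) = (\<Sum>i<n. (0 + z i)^2)" by (auto intro: sum.cong)
      then show "z \<in> {z \<in> space ?G. ?\<tau> z \<in> D \<inter> T \<inter> H}"
        using z in_space unfolding Ae_def Au_def Al_def Ah_def T_def H_def shell_def vnorm_def
        by (auto intro!: real_sqrt_le_mono)
    qed
    have "{z \<in> space ?G. ?\<tau> z \<in> D \<inter> T \<inter> H} = ?\<tau> -` (D \<inter> T \<inter> H) \<inter> space ?G" by auto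
    moreover have "D \<inter> T \<inter> H \<in> sets (Leb_n n)"
      unfolding T_def H_def using D shell_sets by (auto simp: Leb_n_def)
    ultimately show "{z \<in> space ?G. ?\<tau> z \<in> D \<inter> T \<inter> H} \<in> G.events"
      using measurable_sets[OF shift_measurable] by metis
  qed
  finally show ?thesis .
qed

lemma volume_ge_ball:
  fixes N \<gamma> :: real and c :: "nat \<Rightarrow> real"
  assumes g: "0 < \<gamma>" "\<gamma> < N" and n: "n > 0"
    and ratio: "exp (1 - real n * \<gamma> / (4*N)) \<le> 1/2"
    and E: "E \<in> sets (Leb_n n)"
    and far: "\<And>y. y \<in> E \<Longrightarrow> real n * (N - \<gamma>/2) \<le> (\<Sum>i<n. (y i - c i)^2)"
    and half: "1/2 \<le> measure (gauss_n N n) {z \<in> space (gauss_n N n). restrict (\<lambda>i. c i + z i) {..<n} \<in> E}"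
  shows "ennreal ((real n * pi * (N - \<gamma>)) powr (real n / 2) / Gamma (real n / 2 + 1))
    \<le> emeasure (Leb_n n) E"
proof -
  have N: "N > 0" using g by simp
  interpret G: prob_space "gauss_n N n" by (rule prob_space_gauss_n[OF N])
  define V where "V = (real n * pi * (N - \<gamma>)) powr (real n / 2) / Gamma (real n / 2 + 1)"
  define M where "M = (1 / sqrt (2*pi*N))^n * exp (- (real n * (N - \<gamma>/2)) / (2*N))"
  have M: "M > 0" unfolding M_def using N by simp
  have VM: "V * M \<le> 1/2"
    using ball_volume_times_density[OF g n] ratio unfolding V_def M_def by linarith
  have "ennreal (1/2) \<le> ennreal (measure (gauss_n N n) {z \<in> space (gauss_n N n). restrict (\<lambda>i. c i + z i) {..<n} \<in> E})"
    using half by (rule ennreal_leI)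
  also have "\<dots> = emeasure (gauss_n N n) {z \<in> space (gauss_n N n). restrict (\<lambda>i. c i + z i) {..<n} \<in> E}"
    by (simp add: G.emeasure_eq_measure)
  also have "\<dots> \<le> ennreal M * emeasure (Leb_n n) E"
    unfolding M_def by (rule received_prob_le_volume[OF N E far])
  finally have key: "ennreal (1/2) \<le> ennreal M * emeasure (Leb_n n) E" .
  have "ennreal V \<le> emeasure (Leb_n n) E"
  proof (cases "emeasure (Leb_n n) E")
    case (real e)
    then have "ennreal (1/2) \<le> ennreal (M * e)" using key M by (simp add: ennreal_mult)
    then have "1/2 \<le> M * e" using M real by (subst (asm) ennreal_le_iff) auto
    then have "V * M \<le> e * M" using VM by (simp add: mult.commute)
    then have "V \<le> e" using M by simp
    then show ?thesis using real by (simp add: ennreal_leI)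
  qed simp
  then show ?thesis unfolding V_def .
qed

lemma one_codeword_volume:
  fixes N \<gamma> \<rho>b \<rho> :: real and c :: "nat \<Rightarrow> real" and D :: "(nat \<Rightarrow> real) set"
  assumes N: "N > 0" and g: "\<gamma> > 0" "\<gamma> < N" and r: "0 \<le> \<rho>" "\<rho> \<le> \<rho>b"
    and large: "large_blocklength N \<gamma> \<rho>b n"
    and D: "D \<in> sets (Leb_n n)"
    and c: "c \<in> shell n (\<lambda>_. 0) (sqrt (real n * \<rho>)) (sqrt (real n * \<rho>) + \<gamma>)"
    and err: "measure (gauss_n N n) {z \<in> space (gauss_n N n). restrict (\<lambda>i. c i + z i) {..<n} \<notin> D} \<le> 1/4"
  shows "ennreal ((real n * pi * (N - \<gamma>)) powr (real n / 2) / Gamma (real n / 2 + 1))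
    \<le> emeasure (Leb_n n) (D \<inter> shell n (\<lambda>_. 0) (sqrt (real n * (\<rho> + N - \<gamma>))) (sqrt (real n * (\<rho> + N + \<gamma>)))
         \<inter> {y \<in> space (Leb_n n). real n * (N - \<gamma>/2) \<le> (\<Sum>i<n. (y i - c i)^2)})"
proof (rule volume_ge_ball[OF g])
  show "0 < n" "exp (1 - real n * \<gamma> / (4*N)) \<le> 1/2"
    using large by (simp_all add: large_blocklength_def)
  have "{y \<in> space (Leb_n n). real n * (N - \<gamma>/2) \<le> (\<Sum>i<n. (y i - c i)^2)} \<in> sets (Leb_n n)"
    unfolding Leb_n_def by measurable
  then show "D \<inter> shell n (\<lambda>_. 0) (sqrt (real n * (\<rho> + N - \<gamma>))) (sqrt (real n * (\<rho> + N + \<gamma>)))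
      \<inter> {y \<in> space (Leb_n n). real n * (N - \<gamma>/2) \<le> (\<Sum>i<n. (y i - c i)^2)} \<in> sets (Leb_n n)"
    using D shell_sets by blast
qed (use received_typical[OF N g r large D c err] in auto)

subsection \<open>Summing over the codebook\<close>

lemma measure_ge_card_times:
  fixes M :: "'a measure" and F :: "'b \<Rightarrow> 'a set" and V :: real
  assumes S: "finite S" and U: "U \<in> sets M" "emeasure M U < \<infinity>"
    and disj: "disjoint_family_on F S"
    and F: "\<And>w. w \<in> S \<Longrightarrow> F w \<in> sets M" "\<And>w. w \<in> S \<Longrightarrow> F w \<subseteq> U"
    and large: "\<And>w. w \<in> S \<Longrightarrow> ennreal V \<le> emeasure M (F w)" and V: "V \<ge> 0"
  shows "real (card S) * V \<le> measure M U"
proof -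
  have "ennreal (real (card S) * V) = (\<Sum>w\<in>S. ennreal V)"
    using V by (simp add: ennreal_mult ennreal_of_nat_eq_real_of_nat)
  also have "\<dots> \<le> (\<Sum>w\<in>S. emeasure M (F w))" using large by (intro sum_mono) auto
  also have "\<dots> = emeasure M (\<Union>w\<in>S. F w)" using F disj S by (intro sum_emeasure) auto
  also have "\<dots> \<le> emeasure M U" using U F by (intro emeasure_mono) auto
  also have "\<dots> = ennreal (measure M U)" using U by (simp add: emeasure_eq_ennreal_measure)
  finally show ?thesis using V by (simp add: ennreal_le_iff)
qed

lemma codebook_volume:
  fixes N \<gamma> \<rho>b \<rho> :: real and dec :: "(nat \<Rightarrow> real) \<Rightarrow> 'm" and x :: "'m \<Rightarrow> nat \<Rightarrow> real"
  assumes N: "N > 0" and g: "\<gamma> > 0" "\<gamma> < N" and r: "0 \<le> \<rho>" "\<rho> \<le> \<rho>b"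
    and large: "large_blocklength N \<gamma> \<rho>b n"
    and dec: "dec \<in> measurable (Leb_n n) (count_space UNIV)"
    and S: "finite S"
    and shell: "\<And>w. w \<in> S \<Longrightarrow> x w \<in> shell n (\<lambda>_. 0) (sqrt (real n * \<rho>)) (sqrt (real n * \<rho>) + \<gamma>)"
    and err: "\<And>w. w \<in> S \<Longrightarrow> err_prob N n dec (x w) w \<le> 1/4"
  shows "real (card S) * ((real n * pi * (N - \<gamma>)) powr (real n / 2) / Gamma (real n / 2 + 1))
    \<le> measure (Leb_n n) ((\<Union>w\<in>S. dec_region n dec w) \<inter>
         shell n (\<lambda>_. 0) (sqrt (real n * (\<rho> + N - \<gamma>))) (sqrt (real n * (\<rho> + N + \<gamma>))))"
proof -
  define T where "T = shell n (\<lambda>_. 0) (sqrt (real n * (\<rho> + N - \<gamma>))) (sqrt (real n * (\<rho> + N + \<gamma>)))"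
  define F where "F w = dec_region n dec w \<inter> T \<inter>
    {y \<in> space (Leb_n n). real n * (N - \<gamma>/2) \<le> (\<Sum>i<n. (y i - x w i)^2)}" for w
  have region: "dec_region n dec w \<in> sets (Leb_n n)" for w
  proof -
    have "dec_region n dec w = dec -` {w} \<inter> space (Leb_n n)" by (auto simp: dec_region_def)
    then show ?thesis using measurable_sets[OF dec, of "{w}"] by simp
  qed
  have "{y \<in> space (Leb_n n). real n * (N - \<gamma>/2) \<le> (\<Sum>i<n. (y i - x w i)^2)} \<in> sets (Leb_n n)" for w
    unfolding Leb_n_def by measurable
  then have F_sets: "F w \<in> sets (Leb_n n)" for w
    unfolding F_def T_def using region shell_sets by (intro sets.Int)
  have "(\<Union>w\<in>S. dec_region n dec w) \<inter> T \<subseteq> T" by blast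
  then have finite: "emeasure (Leb_n n) ((\<Union>w\<in>S. dec_region n dec w) \<inter> T) < \<infinity>"
    unfolding T_def by (rule order.strict_trans1[OF emeasure_mono[OF _ shell_sets] shell_finite_measure])
  show ?thesis unfolding T_def[symmetric]
  proof (rule measure_ge_card_times[OF S _ finite, where F=F])
    show "(\<Union>w\<in>S. dec_region n dec w) \<inter> T \<in> sets (Leb_n n)"
      using region S unfolding T_def by (intro sets.Int sets.finite_UN shell_sets) auto
    show "disjoint_family_on F S"
      unfolding disjoint_family_on_def F_def dec_region_def by auto
    show "ennreal ((real n * pi * (N - \<gamma>)) powr (real n / 2) / Gamma (real n / 2 + 1)) \<le> emeasure (Leb_n n) (F w)"
      if "w \<in> S" for w
      unfolding F_def T_def using err[OF that]
      by (intro one_codeword_volume[OF N g r large region shell[OF that]])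
         (simp add: err_prob_def dec_region_def)
    show "F w \<in> sets (Leb_n n)" "F w \<subseteq> (\<Union>w\<in>S. dec_region n dec w) \<inter> T" if "w \<in> S" for w
      using F_sets that unfolding F_def by auto
  qed simp
qed

theorem lemma9:
  fixes N R \<rho>bar \<gamma> :: real
    and dec :: "nat \<Rightarrow> (nat \<Rightarrow> real) \<Rightarrow> 'm"
    and x :: "nat \<Rightarrow> 'm \<Rightarrow> (nat \<Rightarrow> real)"
    and p \<rho> :: "nat \<Rightarrow> real"
    and S :: "nat \<Rightarrow> 'm set"
  assumes "N > 0" "R > 0" "\<rho>bar > 0" "0 < \<gamma>" "\<gamma> < N"
    and dec_meas: "\<And>n. dec n \<in> measurable (Leb_n n) (count_space UNIV)"
    and p_lim: "p \<longlonglongrightarrow> 0"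
    and rho: "\<And>n. 0 \<le> \<rho> n \<and> \<rho> n \<le> \<rho>bar"
    and S_fin: "\<And>n. finite (S n)"
    and S_card: "\<And>n. real (card (S n)) \<ge> exp (real n * (R - \<gamma>))"
    and S_shell: "\<And>n w. w \<in> S n \<Longrightarrow>
       x n w \<in> shell n (\<lambda>_. 0) (sqrt (real n * \<rho> n)) (sqrt (real n * \<rho> n) + \<gamma>)"
    and S_err: "\<And>n w. w \<in> S n \<Longrightarrow> err_prob N n (dec n) (x n w) w \<le> (2 / \<gamma>) * p n"
  shows "\<forall>\<^sub>F n in sequentially.
     measure (Leb_n n)
       ((\<Union>w\<in>S n. dec_region n (dec n) w) \<inter>
        shell n (\<lambda>_. 0) (sqrt (real n * (\<rho> n + N - \<gamma>))) (sqrt (real n * (\<rho> n + N + \<gamma>))))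
     \<ge> exp (real n * (R - \<gamma>)) * (real n * pi * (N - \<gamma>)) powr (real n / 2)
         / Gamma (real n / 2 + 1)"
proof -
  have "(\<lambda>n. (2 / \<gamma>) * p n) \<longlonglongrightarrow> 0" using tendsto_mult_right_zero[OF p_lim] .
  then have "eventually (\<lambda>n. (2 / \<gamma>) * p n < 1/4) sequentially" by (rule order_tendstoD) simp
  then have "eventually (\<lambda>n. (2 / \<gamma>) * p n \<le> 1/4) sequentially"
    by (rule eventually_mono) simp
  moreover have "eventually (large_blocklength N \<gamma> \<rho>bar) sequentially"
    using \<open>N > 0\<close> \<open>0 < \<gamma>\<close> \<open>\<rho>bar > 0\<close> by (intro eventually_large_blocklength) auto
  ultimately show ?thesis
  proof eventually_elim
    case (elim n)
    let ?V = "(real n * pi * (N - \<gamma>)) powr (real n / 2) / Gamma (real n / 2 + 1)"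
    have err: "err_prob N n (dec n) (x n w) w \<le> 1/4" if "w \<in> S n" for w
      using S_err[OF that] elim(1) by linarith
    have "exp (real n * (R - \<gamma>)) * ?V \<le> real (card (S n)) * ?V"
      using S_card by (intro mult_right_mono) auto
    also have "\<dots> \<le> measure (Leb_n n) ((\<Union>w\<in>S n. dec_region n (dec n) w) \<inter>
        shell n (\<lambda>_. 0) (sqrt (real n * (\<rho> n + N - \<gamma>))) (sqrt (real n * (\<rho> n + N + \<gamma>))))"
      using rho[of n] by (intro codebook_volume[OF \<open>N > 0\<close> \<open>0 < \<gamma>\<close> \<open>\<gamma> < N\<close> _ _ elim(2)
          dec_meas S_fin S_shell err]) auto
    finally show ?case by simp
  qed
qed

end
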